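(* Let $\Gamma:\mathbb{C}^n\to\mathbb{C}^n$ be a homogeneous quadratic polynomial map with real coefficients such that $(x,\Gamma(x))=0$ and $(\Gamma(x),\Gamma(x))=0$ for all $x\in C$. Then there exists a germ of diffeomorphism $\Phi:(\mathbb{R}^n,0)\to(\mathbb{R}^n,0)$ with $d_0\Phi=\mathrm{id}$ and $\Phi(x)=x+\Gamma(x)+O(|x|^3)$ (i.e. $\Phi_2=\Gamma$) such that for every straight line $L$ through $0$ the image under $\Phi$ of some neighborhood of $0$ in $L$ is contained in a circle.
   Context: A *circle* in $\mathbb{R}^n$ means either a round Euclidean circle or a straight line. $(\cdot,\cdot)$ denotes the standard Euclidean inner product on $\mathbb{R}^n$, extended to $\mathbb{C}^n$ complex-bilinearly, and the *asymptotic cone* is $C=\{x\in\mathbb{C}^n:(x,x)=0\}$. For a smooth germ $\Phi$ with $\Phi(0)=0$, $d_0\Phi=\mathrm{id}$, $\Phi_2$ denotes the homogeneous quadratic part of its Taylor expansion. *)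

theory Defs
  imports "HOL-Analysis.Analysis"
begin

text \<open>C-infinity smoothness on a set U (meant for open U): f is Frechet differentiable
  at every point of U and every directional derivative x -> f'(x) v is again smooth on U.
  (Differentiability of all derivatives implies their continuity, so this is C-infinity.)\<close>
coinductive smooth_on :: "'a::real_normed_vector set \<Rightarrow> ('a \<Rightarrow> 'b::real_normed_vector) \<Rightarrow> bool"
  where "(\<And>x. x \<in> U \<Longrightarrow> (f has_derivative f' x) (at x))
         \<Longrightarrow> (\<And>v. smooth_on U (\<lambda>x. f' x v)) \<Longrightarrow> smooth_on U f"

definition quad_real :: "('n::finite \<Rightarrow> 'n \<Rightarrow> 'n \<Rightarrow> real) \<Rightarrow> real^'n \<Rightarrow> real^'n" where
  "quad_real a x = (\<chi> k. \<Sum>i\<in>UNIV. \<Sum>j\<in>UNIV. a k i j * x$i * x$j)"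

definition quad_complex :: "('n::finite \<Rightarrow> 'n \<Rightarrow> 'n \<Rightarrow> real) \<Rightarrow> complex^'n \<Rightarrow> complex^'n" where
  "quad_complex a x = (\<chi> k. \<Sum>i\<in>UNIV. \<Sum>j\<in>UNIV. complex_of_real (a k i j) * x$i * x$j)"

definition cbil :: "complex^'n::finite \<Rightarrow> complex^'n \<Rightarrow> complex" where
  "cbil x y = (\<Sum>i\<in>UNIV. x$i * y$i)"

text \<open>A circle: a round Euclidean circle or a straight line.\<close>
definition is_circle :: "(real^'n::finite) set \<Rightarrow> bool" where
  "is_circle S \<longleftrightarrow>
     (\<exists>p u w r. norm u = 1 \<and> norm w = 1 \<and> u \<bullet> w = 0 \<and> r > 0 \<and>
        S = {p + (r * cos t) *\<^sub>R u + (r * sin t) *\<^sub>R w | t. True})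
   \<or> (\<exists>p v. v \<noteq> 0 \<and> S = {p + t *\<^sub>R v | t. True})"
end

theory Submission
  imports Defs
begin

text \<open>The real polynomials (x, \<Gamma> x) and (\<Gamma> x, \<Gamma> x) vanish on the complex cone (x, x) = 0, hence
  are divisible by (x, x): (x, \<Gamma> x) = (x, x) \<mu> x with \<mu> linear and |\<Gamma> x|^2 = (x, x) q x.
  Put W x = \<Gamma> x - 2 \<mu>(x) x. Then |x + W x|^2 = |x|^2 (1 - 2 \<mu> x + q x), and
  \<Phi> x = |x|^2 (x + W x) / |x + W x|^2 is x + \<Gamma> x + O(|x|^3). As W is homogeneous quadratic,
  x + W x = t (v + t W v) for x = t v, so \<Phi> maps the line through v into the image of the
  affine line s \<mapsto> s v + W v under an inversion, which lies in a circle. Finally \<Phi> is a local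
  diffeomorphism by the inverse function theorem, its inverse being smooth by Cramer's rule.\<close>

section \<open>Smooth maps\<close>

lemma smooth_on_invariantI:
  fixes f :: "'a::real_normed_vector \<Rightarrow> 'b::real_normed_vector"
  assumes "P f"
    and step: "\<And>g. P g \<Longrightarrow> \<exists>g'. (\<forall>x\<in>U. (g has_derivative g' x) (at x)) \<and>
                 (\<forall>v. P (\<lambda>x. g' x v) \<or> smooth_on U (\<lambda>x. g' x v))"
  shows "smooth_on U f"
  using assms(1)
proof (coinduction arbitrary: f rule: smooth_on.coinduct)
  case (smooth_on f)
  from step[OF this] obtain g' where "\<forall>x\<in>U. (f has_derivative g' x) (at x)"
    "\<forall>v. P (\<lambda>x. g' x v) \<or> smooth_on U (\<lambda>x. g' x v)" by blast
  then show ?case by blast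
qed

lemma smooth_onD:
  assumes "smooth_on U f"
  obtains f' where "\<And>x. x \<in> U \<Longrightarrow> (f has_derivative f' x) (at x)" "\<And>v. smooth_on U (\<lambda>x. f' x v)"
  using assms by (cases rule: smooth_on.cases) auto

lemma smooth_on_const: "smooth_on U (\<lambda>x. c)"
  by (rule smooth_on_invariantI[where P="\<lambda>g. \<exists>c. g = (\<lambda>x. c)"]) (auto intro!: exI[of _ "\<lambda>x v. 0"])

lemma smooth_on_linear:
  assumes "bounded_linear L"
  shows "smooth_on U L"
  by (rule smooth_on_invariantI[where P="\<lambda>g. g = L"])
     (auto intro!: exI[of _ "\<lambda>x. L"] bounded_linear.has_derivative[OF assms] smooth_on_const)

lemma smooth_on_id: "smooth_on U (\<lambda>x. x)"
  by (rule smooth_on_linear) (rule bounded_linear_ident)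

lemma smooth_on_compose_linear:
  assumes "smooth_on U F" "bounded_linear L"
  shows "smooth_on U (\<lambda>x. L (F x))"
proof (rule smooth_on_invariantI[where P="\<lambda>h. \<exists>F. smooth_on U F \<and> h = (\<lambda>x. L (F x))"])
  fix g assume "\<exists>F. smooth_on U F \<and> g = (\<lambda>x. L (F x))"
  then obtain F where F: "smooth_on U F" and g: "g = (\<lambda>x. L (F x))" by blast
  obtain F' where "\<And>x. x \<in> U \<Longrightarrow> (F has_derivative F' x) (at x)" "\<And>v. smooth_on U (\<lambda>x. F' x v)"
    using smooth_onD[OF F] by blast
  then show "\<exists>g'. (\<forall>x\<in>U. (g has_derivative g' x) (at x)) \<and>
      (\<forall>v. (\<exists>F. smooth_on U F \<and> (\<lambda>x. g' x v) = (\<lambda>x. L (F x))) \<or> smooth_on U (\<lambda>x. g' x v))"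
    using g
    by (auto intro!: exI[of _ "\<lambda>x v. L (F' x v)"] bounded_linear.has_derivative[OF assms(2)])
qed (use assms in auto)

text \<open>The product rule produces sums of products, so smoothness of products is proved
  for the class of finite sums of products of smooth functions, which is closed under
  differentiation.\<close>

inductive smooth_product_sum :: "'a::real_normed_vector set \<Rightarrow> ('a \<Rightarrow> 'b::real_normed_vector) \<Rightarrow> bool"
  for U where
  product: "smooth_on U (f :: 'a \<Rightarrow> real) \<Longrightarrow> smooth_on U g \<Longrightarrow> smooth_product_sum U (\<lambda>x. f x *\<^sub>R g x)"
| add: "smooth_product_sum U h1 \<Longrightarrow> smooth_product_sum U h2 \<Longrightarrow> smooth_product_sum U (\<lambda>x. h1 x + h2 x)"

lemma smooth_product_sum_derivative:
  assumes "smooth_product_sum U h"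
  shows "\<exists>h'. (\<forall>x\<in>U. (h has_derivative h' x) (at x)) \<and> (\<forall>v. smooth_product_sum U (\<lambda>x. h' x v))"
  using assms
proof induction
  case (product f g)
  obtain f' where f': "\<And>x. x \<in> U \<Longrightarrow> (f has_derivative f' x) (at x)" "\<And>v. smooth_on U (\<lambda>x. f' x v)"
    using smooth_onD[OF product(1)] by blast
  obtain g' where g': "\<And>x. x \<in> U \<Longrightarrow> (g has_derivative g' x) (at x)" "\<And>v. smooth_on U (\<lambda>x. g' x v)"
    using smooth_onD[OF product(2)] by blast
  show ?case
    using f' g' product
    by (auto intro!: exI[of _ "\<lambda>x v. f x *\<^sub>R g' x v + f' x v *\<^sub>R g x"] has_derivative_scaleR
        smooth_product_sum.intros)
next
  case (add h1 h2)
  then obtain h1' h2' where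
    "\<forall>x\<in>U. (h1 has_derivative h1' x) (at x)" "\<forall>v. smooth_product_sum U (\<lambda>x. h1' x v)"
    "\<forall>x\<in>U. (h2 has_derivative h2' x) (at x)" "\<forall>v. smooth_product_sum U (\<lambda>x. h2' x v)"
    by blast
  then show ?case
    by (auto intro!: exI[of _ "\<lambda>x v. h1' x v + h2' x v"] has_derivative_add
        smooth_product_sum.intros)
qed

lemma smooth_product_sum_imp_smooth_on: "smooth_product_sum U h \<Longrightarrow> smooth_on U h"
  by (rule smooth_on_invariantI[where P="smooth_product_sum U"])
     (assumption, drule smooth_product_sum_derivative, blast)

lemma smooth_on_scaleR:
  "smooth_on U (f :: _ \<Rightarrow> real) \<Longrightarrow> smooth_on U g \<Longrightarrow> smooth_on U (\<lambda>x. f x *\<^sub>R g x)"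
  by (rule smooth_product_sum_imp_smooth_on) (rule smooth_product_sum.product)

lemma smooth_on_add:
  assumes "smooth_on U f" "smooth_on U g"
  shows "smooth_on U (\<lambda>x. f x + g x)"
proof -
  have "smooth_product_sum U (\<lambda>x. (1::real) *\<^sub>R f x + (1::real) *\<^sub>R g x)"
    by (intro smooth_product_sum.intros smooth_on_const assms)
  then show ?thesis by (auto dest: smooth_product_sum_imp_smooth_on)
qed

lemma smooth_on_mult:
  "smooth_on U (f :: _ \<Rightarrow> real) \<Longrightarrow> smooth_on U g \<Longrightarrow> smooth_on U (\<lambda>x. f x * g x)"
  using smooth_on_scaleR[of U f g] by simp

lemma smooth_on_minus: "smooth_on U f \<Longrightarrow> smooth_on U (\<lambda>x. - f x)"
  using smooth_on_compose_linear[of U f uminus]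
  by (simp add: bounded_linear_minus[OF bounded_linear_ident])

lemma smooth_on_diff:
  "smooth_on U f \<Longrightarrow> smooth_on U g \<Longrightarrow> smooth_on U (\<lambda>x. f x - g x)"
  using smooth_on_add[of U f "\<lambda>x. - g x"] smooth_on_minus[of U g] by simp

lemma smooth_on_sum:
  "finite S \<Longrightarrow> (\<And>i. i \<in> S \<Longrightarrow> smooth_on U (f i)) \<Longrightarrow> smooth_on U (\<lambda>x. \<Sum>i\<in>S. f i x)"
  by (induction S rule: finite_induct) (auto intro!: smooth_on_add smooth_on_const)

lemma smooth_on_prod:
  fixes f :: "_ \<Rightarrow> _ \<Rightarrow> real"
  shows "finite S \<Longrightarrow> (\<And>i. i \<in> S \<Longrightarrow> smooth_on U (f i)) \<Longrightarrow> smooth_on U (\<lambda>x. \<Prod>i\<in>S. f i x)"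
  by (induction S rule: finite_induct) (auto intro!: smooth_on_mult smooth_on_const)

lemma smooth_on_inverse:
  fixes D :: "_ \<Rightarrow> real"
  assumes D: "smooth_on U D" and nz: "\<And>x. x \<in> U \<Longrightarrow> D x \<noteq> 0"
  shows "smooth_on U (\<lambda>x. inverse (D x))"
proof (rule smooth_on_invariantI
    [where P="\<lambda>h. \<exists>g k. smooth_on U g \<and> h = (\<lambda>x. g x * inverse (D x) ^ k)"])
  show "\<exists>g k. smooth_on U g \<and> (\<lambda>x. inverse (D x)) = (\<lambda>x. g x * inverse (D x) ^ k)"
    by (intro exI[of _ "\<lambda>x. 1"] exI[of _ 1]) (simp add: smooth_on_const)
next
  fix h assume "\<exists>g k. smooth_on U g \<and> h = (\<lambda>x. g x * inverse (D x) ^ k)"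
  then obtain g k where g: "smooth_on U g" and h: "h = (\<lambda>x. g x * inverse (D x) ^ k)" by blast
  obtain g' where g': "\<And>x. x \<in> U \<Longrightarrow> (g has_derivative g' x) (at x)" "\<And>v. smooth_on U (\<lambda>x. g' x v)"
    using smooth_onD[OF g] by blast
  obtain D' where D': "\<And>x. x \<in> U \<Longrightarrow> (D has_derivative D' x) (at x)" "\<And>v. smooth_on U (\<lambda>x. D' x v)"
    using smooth_onD[OF D] by blast
  define h' where "h' x v = (g' x v * D x - real k * g x * D' x v) * inverse (D x) ^ Suc k" for x v
  have "(h has_derivative h' x) (at x)" if x: "x \<in> U" for x
  proof -
    have "(h has_derivative
       (\<lambda>v. g x * (of_nat k * (- (inverse (D x) * D' x v * inverse (D x)))
            * inverse (D x) ^ (k - 1)) + g' x v * inverse (D x) ^ k)) (at x)"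
      unfolding h
      by (rule has_derivative_mult[OF g'(1)[OF x]
         has_derivative_power[OF Deriv.has_derivative_inverse[OF nz[OF x] D'(1)[OF x]]]])
    also have "(\<lambda>v. g x * (of_nat k * (- (inverse (D x) * D' x v * inverse (D x)))
            * inverse (D x) ^ (k - 1)) + g' x v * inverse (D x) ^ k) = h' x"
      using nz[OF x] by (cases k) (auto simp: h'_def field_simps)
    finally show ?thesis .
  qed
  moreover have "\<exists>g k. smooth_on U g \<and> (\<lambda>x. h' x v) = (\<lambda>x. g x * inverse (D x) ^ k)" for v
    by (intro exI[of _ "\<lambda>x. g' x v * D x - real k * g x * D' x v"] exI[of _ "Suc k"] conjI)
       (auto simp: h'_def intro!: smooth_on_diff smooth_on_mult smooth_on_const g g'(2) D D'(2))
  ultimately show "\<exists>h'. (\<forall>x\<in>U. (h has_derivative h' x) (at x)) \<and>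
      (\<forall>v. (\<exists>g k. smooth_on U g \<and> (\<lambda>x. h' x v) = (\<lambda>x. g x * inverse (D x) ^ k))
        \<or> smooth_on U (\<lambda>x. h' x v))"
    by blast
qed

lemma smooth_on_divide:
  fixes g D :: "_ \<Rightarrow> real"
  assumes "smooth_on U g" "smooth_on U D" "\<And>x. x \<in> U \<Longrightarrow> D x \<noteq> 0"
  shows "smooth_on U (\<lambda>x. g x / D x)"
  using smooth_on_mult[OF assms(1) smooth_on_inverse[OF assms(2,3)]] by (simp add: divide_inverse)

lemma smooth_on_subset:
  assumes "smooth_on U f" "V \<subseteq> U"
  shows "smooth_on V f"
proof (rule smooth_on_invariantI[where P="smooth_on U"])
  fix g assume "smooth_on U g"
  then obtain g' where "\<And>x. x \<in> U \<Longrightarrow> (g has_derivative g' x) (at x)" "\<And>v. smooth_on U (\<lambda>x. g' x v)"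
    using smooth_onD by blast
  then show "\<exists>g'. (\<forall>x\<in>V. (g has_derivative g' x) (at x)) \<and>
      (\<forall>v. smooth_on U (\<lambda>x. g' x v) \<or> smooth_on V (\<lambda>x. g' x v))"
    using assms(2) by blast
qed (rule assms(1))

lemma smooth_on_cong:
  assumes "smooth_on U f" "open U" "\<And>x. x \<in> U \<Longrightarrow> f x = g x"
  shows "smooth_on U g"
proof (rule smooth_on_invariantI[where P="\<lambda>h. h = g"])
  obtain f' where f': "\<And>x. x \<in> U \<Longrightarrow> (f has_derivative f' x) (at x)" "\<And>v. smooth_on U (\<lambda>x. f' x v)"
    using smooth_onD[OF assms(1)] by blast
  have "(g has_derivative f' x) (at x)" if "x \<in> U" for x
    using has_derivative_transform_within_open[OF f'(1)[OF that] assms(2) that] assms(3) by blast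
  then show "\<exists>g'. (\<forall>x\<in>U. (h has_derivative g' x) (at x)) \<and>
      (\<forall>v. (\<lambda>x. g' x v) = g \<or> smooth_on U (\<lambda>x. g' x v))"
    if "h = g" for h
    using f'(2) that by blast
qed simp

lemma smooth_on_imp_continuous_on:
  assumes "smooth_on U f"
  shows "continuous_on U f"
proof -
  obtain f' where "\<And>x. x \<in> U \<Longrightarrow> (f has_derivative f' x) (at x)"
    using smooth_onD[OF assms] by blast
  then show ?thesis
    by (intro continuous_at_imp_continuous_on) (auto intro: has_derivative_continuous)
qed

lemma smooth_on_vec_nth: "smooth_on U F \<Longrightarrow> smooth_on U (\<lambda>x. F x $ k)"
  by (rule smooth_on_compose_linear[where L="\<lambda>y. y $ k"]) (auto intro: bounded_linear_vec_nth)

lemma smooth_on_vec_lambda: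
  assumes "\<And>k. smooth_on U (\<lambda>x. f k x :: real)"
  shows "smooth_on U (\<lambda>x. (\<chi> k. f k x) :: real^'n::finite)"
proof -
  have "smooth_on U (\<lambda>x. \<Sum>k\<in>UNIV. f k x *\<^sub>R (axis k 1 :: real^'n))"
    by (intro smooth_on_sum smooth_on_scaleR assms smooth_on_const) auto
  moreover have "(\<Sum>k\<in>UNIV. f k x *\<^sub>R (axis k 1 :: real^'n)) = (\<chi> k. f k x)" for x
    by (simp add: vec_eq_iff axis_def if_distrib cong: if_cong)
  ultimately show ?thesis by simp
qed

lemma smooth_on_inner:
  fixes f g :: "_ \<Rightarrow> real^'n::finite"
  assumes "smooth_on U f" "smooth_on U g"
  shows "smooth_on U (\<lambda>x. f x \<bullet> g x)"
  unfolding inner_vec_def inner_real_def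
  by (intro smooth_on_sum smooth_on_mult smooth_on_vec_nth assms) auto

lemma smooth_on_det:
  fixes A :: "_ \<Rightarrow> real^'n::finite^'n"
  assumes "\<And>i j. smooth_on U (\<lambda>x. A x $ i $ j)"
  shows "smooth_on U (\<lambda>x. det (A x))"
  unfolding det_def
  by (intro smooth_on_sum smooth_on_mult smooth_on_const smooth_on_prod assms)
     (auto intro: finite_permutations)

section \<open>Smooth local inverses\<close>

lemma smooth_on_linear_apply:
  fixes A :: "'a::real_normed_vector \<Rightarrow> real^'n::finite \<Rightarrow> 'b::real_normed_vector"
  assumes "open U" and lin: "\<And>x. x \<in> U \<Longrightarrow> linear (A x)"
    and A: "\<And>v. smooth_on U (\<lambda>x. A x v)" and g: "smooth_on U g"
  shows "smooth_on U (\<lambda>x. A x (g x))"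
proof (rule smooth_on_cong[OF _ \<open>open U\<close>])
  show "smooth_on U (\<lambda>x. \<Sum>k\<in>UNIV. g x $ k *\<^sub>R A x (axis k 1))"
    by (rule smooth_on_sum) (simp_all add: smooth_on_scaleR smooth_on_vec_nth g A)
  show "(\<Sum>k\<in>UNIV. g x $ k *\<^sub>R A x (axis k 1)) = A x (g x)" if "x \<in> U" for x
  proof -
    have "A x (g x) = A x (\<Sum>k\<in>UNIV. g x $ k *\<^sub>R axis k 1)"
      using basis_expansion[of "g x"] by (simp add: scalar_mult_eq_scaleR)
    also have "\<dots> = (\<Sum>k\<in>UNIV. g x $ k *\<^sub>R A x (axis k 1))"
      by (simp add: linear_sum[OF lin[OF that]] linear_scale[OF lin[OF that]])
    finally show ?thesis ..
  qed
qed

text \<open>Cramer's rule expresses the inverse of a smoothly varying invertible matrix smoothly.\<close>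

lemma smooth_on_inverse_linear:
  fixes L :: "'a::real_normed_vector \<Rightarrow> real^'n::finite \<Rightarrow> real^'n"
  assumes lin: "\<And>x. x \<in> U \<Longrightarrow> linear (L x)" and inj: "\<And>x. x \<in> U \<Longrightarrow> inj (L x)"
    and L: "\<And>v. smooth_on U (\<lambda>x. L x v)"
  obtains Linv where "\<And>v. smooth_on U (\<lambda>x. Linv x v)" "\<And>x v. x \<in> U \<Longrightarrow> L x (Linv x v) = v"
proof
  define M where "M x = matrix (L x)" for x
  have det_nz: "det (M x) \<noteq> 0" if "x \<in> U" for x
    unfolding M_def using det_nz_iff_inj[OF lin[OF that]] inj[OF that] by simp
  have M: "smooth_on U (\<lambda>x. M x $ i $ j)" for i j
    unfolding M_def matrix_def by (simp add: smooth_on_vec_nth L)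
  have M_col: "smooth_on U (\<lambda>x. (\<chi> i j. if j = k then v $ i else M x $ i $ j) $ i $ j)" for i j k v
    by (cases "j = k") (simp_all add: M smooth_on_const)
  show "smooth_on U (\<lambda>x. \<chi> k. det (\<chi> i j. if j = k then v $ i else M x $ i $ j) / det (M x))" for v
    by (intro smooth_on_vec_lambda smooth_on_divide smooth_on_det M M_col det_nz)
  show "L x (\<chi> k. det (\<chi> i j. if j = k then v $ i else M x $ i $ j) / det (M x)) = v"
    if "x \<in> U" for x v
  proof -
    have "M x *v (\<chi> k. det (\<chi> i j. if j = k then v $ i else M x $ i $ j) / det (M x)) = v"
      using cramer[OF det_nz[OF that]] by blast
    then show ?thesis
      by (simp add: M_def matrix_vector_mul(2)[OF lin[OF that]])
  qed
qed

lemma smooth_on_inverse_map: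
  fixes g :: "real^'n::finite \<Rightarrow> real^'n"
  assumes "open U" "open V"
    and lin: "\<And>x. x \<in> U \<Longrightarrow> linear (f' x)" and inj: "\<And>x. x \<in> U \<Longrightarrow> inj (f' x)"
    and f': "\<And>v. smooth_on U (\<lambda>x. f' x v)"
    and g_in: "\<And>y. y \<in> V \<Longrightarrow> g y \<in> U" and g': "\<And>y. y \<in> V \<Longrightarrow> (g has_derivative g' y) (at y)"
    and right_inverse: "\<And>y w. y \<in> V \<Longrightarrow> f' (g y) (g' y w) = w"
  shows "smooth_on V g"
proof -
  obtain Linv where Linv: "\<And>v. smooth_on U (\<lambda>x. Linv x v)" "\<And>x v. x \<in> U \<Longrightarrow> f' x (Linv x v) = v"
    using smooth_on_inverse_linear[OF lin inj f'] by blast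
  have g'_eq: "g' y w = Linv (g y) w" if "y \<in> V" for y w
    by (rule injD[OF inj[OF g_in[OF that]]])
       (simp add: right_inverse[OF that] Linv(2)[OF g_in[OF that]])
  \<comment> \<open>Since g' y = Linv (g y), every derivative of F \<circ> g is again of this form.\<close>
  have "smooth_on V (\<lambda>y. F (g y))" if "smooth_on U F" for F :: "real^'n \<Rightarrow> real^'n"
  proof (rule smooth_on_invariantI[where P="\<lambda>h. \<exists>F. smooth_on U F \<and> (\<forall>y\<in>V. h y = F (g y))"])
    fix h assume "\<exists>F. smooth_on U F \<and> (\<forall>y\<in>V. h y = F (g y))"
    then obtain F where F: "smooth_on U F" and h: "\<And>y. y \<in> V \<Longrightarrow> h y = F (g y)" by blast
    obtain F' where F': "\<And>x. x \<in> U \<Longrightarrow> (F has_derivative F' x) (at x)" "\<And>v. smooth_on U (\<lambda>x. F' x v)"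
      using smooth_onD[OF F] by blast
    have deriv: "(h has_derivative (\<lambda>w. F' (g y) (g' y w))) (at y)" if "y \<in> V" for y
    proof (rule has_derivative_transform_within_open[OF _ \<open>open V\<close> that])
      show "((\<lambda>y. F (g y)) has_derivative (\<lambda>w. F' (g y) (g' y w))) (at y)"
        using diff_chain_at[OF g'[OF that] F'(1)[OF g_in[OF that]]] by (simp add: o_def)
    qed (simp add: h)
    have F'_Linv: "smooth_on U (\<lambda>x. F' x (Linv x v))" for v
    proof (rule smooth_on_linear_apply[OF \<open>open U\<close> _ F'(2) Linv(1)])
      show "linear (F' x)" if "x \<in> U" for x
        using F'(1)[OF that] by (simp add: has_derivative_def bounded_linear.linear)
    qed
    show "\<exists>h'. (\<forall>y\<in>V. (h has_derivative h' y) (at y)) \<and>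
        (\<forall>v. (\<exists>F. smooth_on U F \<and> (\<forall>y\<in>V. h' y v = F (g y))) \<or> smooth_on V (\<lambda>y. h' y v))"
    proof (intro exI[of _ "\<lambda>y w. F' (g y) (g' y w)"] conjI ballI allI disjI1)
      show "(h has_derivative (\<lambda>w. F' (g y) (g' y w))) (at y)" if "y \<in> V" for y
        using that by (rule deriv)
      show "\<exists>F. smooth_on U F \<and> (\<forall>y\<in>V. F' (g y) (g' y v) = F (g y))" for v
        by (rule exI[of _ "\<lambda>x. F' x (Linv x v)"]) (simp add: F'_Linv g'_eq)
    qed
  qed (use that in blast)
  from this[OF smooth_on_id] show ?thesis .
qed

lemma inverse_function_theorem_pointwise:
  fixes f :: "'a::euclidean_space \<Rightarrow> 'a"
  assumes "open U" "x0 \<in> U" and f': "\<And>x. x \<in> U \<Longrightarrow> (f has_derivative f' x) (at x)"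
    and cont: "\<And>v. continuous_on U (\<lambda>x. f' x v)" and "f' x0 = id"
  obtains U' V g g' where "open U'" "x0 \<in> U'" "U' \<subseteq> U" "open V" "homeomorphism U' V f g"
    "\<And>y. y \<in> V \<Longrightarrow> (g has_derivative g' y) (at y)" "\<And>y w. y \<in> V \<Longrightarrow> f' (g y) (g' y w) = w"
    "\<And>x. x \<in> U' \<Longrightarrow> inj (f' x)"
proof -
  have Blinfun_f': "blinfun_apply (Blinfun (f' x)) = f' x" if "x \<in> U" for x
    using f'[OF that] by (intro bounded_linear_Blinfun_apply has_derivative_bounded_linear)
  have derf: "(f has_derivative blinfun_apply (Blinfun (f' x))) (at x)" if "x \<in> U" for x
    using f'[OF that] Blinfun_f'[OF that] by simp
  have "continuous_on U (\<lambda>x. Blinfun (f' x))"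
    using cont
    by (intro continuous_on_blinfun_componentwise) (simp add: Blinfun_f' cong: continuous_on_cong)
  moreover have "id_blinfun o\<^sub>L Blinfun (f' x0) = id_blinfun"
    using Blinfun_f'[OF assms(2)] \<open>f' x0 = id\<close> by (intro blinfun_eqI) simp
  ultimately obtain U' V g g' where U': "open U'" "U' \<subseteq> U" "x0 \<in> U'" and V: "open V" "f x0 \<in> V"
    and hom: "homeomorphism U' V f g"
    and g': "\<And>y. y \<in> V \<Longrightarrow> (g has_derivative (g' y)) (at y)"
    and g'_inv: "\<And>y. y \<in> V \<Longrightarrow> g' y = inv (blinfun_apply (Blinfun (f' (g y))))"
    and bij: "\<And>y. y \<in> V \<Longrightarrow> bij (blinfun_apply (Blinfun (f' (g y))))"
    using inverse_function_theorem[OF assms(1) derf] assms(2) by metis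
  have g_in: "g y \<in> U" if "y \<in> V" for y
    using hom U'(2) that unfolding homeomorphism_def by blast
  have bij_f': "bij (f' (g y))" if "y \<in> V" for y
    using bij[OF that] Blinfun_f'[OF g_in[OF that]] by simp
  have "f' (g y) (g' y w) = w" if "y \<in> V" for y w
    using g'_inv[OF that] Blinfun_f'[OF g_in[OF that]] bij_f'[OF that]
    by (simp add: bij_is_surj surj_f_inv_f)
  moreover have "inj (f' x)" if "x \<in> U'" for x
    using bij_f'[of "f x"] hom that unfolding homeomorphism_def by (metis bij_is_inj image_eqI)
  ultimately show ?thesis
    using that[OF U'(1,3,2) V(1) hom g'] by blast
qed

lemma smooth_local_inverse:
  fixes f :: "real^'n::finite \<Rightarrow> real^'n"
  assumes "open U" "x0 \<in> U" "smooth_on U f" "(f has_derivative id) (at x0)"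
  obtains U' V g where "open U'" "x0 \<in> U'" "U' \<subseteq> U" "open V" "f ` U' = V" "smooth_on V g"
    "\<forall>x\<in>U'. g (f x) = x" "\<forall>y\<in>V. f (g y) = y"
proof -
  obtain f' where f': "\<And>x. x \<in> U \<Longrightarrow> (f has_derivative f' x) (at x)" "\<And>v. smooth_on U (\<lambda>x. f' x v)"
    using smooth_onD[OF assms(3)] by blast
  have "f' x0 = id"
    using has_derivative_unique[OF f'(1)[OF assms(2)] assms(4)] .
  then obtain U' V g g' where U': "open U'" "x0 \<in> U'" "U' \<subseteq> U" and "open V"
    and hom: "homeomorphism U' V f g" and g': "\<And>y. y \<in> V \<Longrightarrow> (g has_derivative g' y) (at y)"
    and right_inverse: "\<And>y w. y \<in> V \<Longrightarrow> f' (g y) (g' y w) = w"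
    and inj: "\<And>x. x \<in> U' \<Longrightarrow> inj (f' x)"
    using inverse_function_theorem_pointwise
      [OF assms(1,2) f'(1) smooth_on_imp_continuous_on[OF f'(2)]] by metis
  have inverse: "\<forall>x\<in>U'. g (f x) = x" "f ` U' = V" "\<forall>y\<in>V. f (g y) = y" "g ` V = U'"
    using hom unfolding homeomorphism_def by auto
  have "smooth_on V g"
  proof (rule smooth_on_inverse_map[OF U'(1) \<open>open V\<close> _ inj _ _ g' right_inverse])
    show "linear (f' x)" if "x \<in> U'" for x
      using f'(1) that U'(3) by (auto intro: bounded_linear.linear has_derivative_bounded_linear)
    show "smooth_on U' (\<lambda>x. f' x v)" for v
      using f'(2) U'(3) by (rule smooth_on_subset)
    show "g y \<in> U'" if "y \<in> V" for y
      using inverse(4) that by blast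
  qed
  from that[OF U' \<open>open V\<close> inverse(2) this] inverse(1,3) show ?thesis by blast
qed

section \<open>Quadratic maps vanishing on the complex cone\<close>

definition quad_bilinear ::
    "('n::finite \<Rightarrow> 'n \<Rightarrow> 'n \<Rightarrow> real) \<Rightarrow> 'n \<Rightarrow> 'b::real_field^'n \<Rightarrow> 'b^'n \<Rightarrow> 'b" where
  "quad_bilinear a k y w = (\<Sum>i\<in>UNIV. \<Sum>j\<in>UNIV. of_real (a k i j) * y$i * w$j)"

definition quad_trilinear ::
    "('n::finite \<Rightarrow> 'n \<Rightarrow> 'n \<Rightarrow> real) \<Rightarrow> 'b::real_field^'n \<Rightarrow> 'b^'n \<Rightarrow> 'b^'n \<Rightarrow> 'b" where
  "quad_trilinear a x y w = (\<Sum>k\<in>UNIV. \<Sum>i\<in>UNIV. \<Sum>j\<in>UNIV. of_real (a k i j) * x$k * y$i * w$j)"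

definition complexify :: "real^'n::finite \<Rightarrow> complex^'n" where
  "complexify x = (\<chi> i. complex_of_real (x$i))"

lemma quad_trilinear_eq_sum: "quad_trilinear a x y w = (\<Sum>k\<in>UNIV. x$k * quad_bilinear a k y w)"
  unfolding quad_trilinear_def quad_bilinear_def
  by (simp add: sum_distrib_left mult.assoc mult.left_commute)

lemma quad_bilinear_add1: "quad_bilinear a k (y + y') w = quad_bilinear a k y w + quad_bilinear a k y' w"
  and quad_bilinear_add2: "quad_bilinear a k y (w + w') = quad_bilinear a k y w + quad_bilinear a k y w'"
  and quad_bilinear_scale1: "quad_bilinear a k (c *s y) w = c * quad_bilinear a k y w"
  and quad_bilinear_scale2: "quad_bilinear a k y (c *s w) = c * quad_bilinear a k y w"
  by (simp_all add: quad_bilinear_def algebra_simps sum.distrib sum_distrib_left)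

lemmas quad_bilinear_bilinear =
  quad_bilinear_add1 quad_bilinear_add2 quad_bilinear_scale1 quad_bilinear_scale2

lemma quad_trilinear_add1:
    "quad_trilinear a (x + x') y w = quad_trilinear a x y w + quad_trilinear a x' y w"
  and quad_trilinear_add2:
    "quad_trilinear a x (y + y') w = quad_trilinear a x y w + quad_trilinear a x y' w"
  and quad_trilinear_add3:
    "quad_trilinear a x y (w + w') = quad_trilinear a x y w + quad_trilinear a x y w'"
  and quad_trilinear_scale1: "quad_trilinear a (c *s x) y w = c * quad_trilinear a x y w"
  and quad_trilinear_scale2: "quad_trilinear a x (c *s y) w = c * quad_trilinear a x y w"
  and quad_trilinear_scale3: "quad_trilinear a x y (c *s w) = c * quad_trilinear a x y w"
  by (simp_all add: quad_trilinear_def algebra_simps sum.distrib sum_distrib_left)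

lemmas quad_trilinear_multilinear =
  quad_trilinear_add1 quad_trilinear_add2 quad_trilinear_add3
  quad_trilinear_scale1 quad_trilinear_scale2 quad_trilinear_scale3

lemma quad_bilinear_zero: "quad_bilinear a k 0 w = 0" "quad_bilinear a k y 0 = 0"
  by (simp_all add: quad_bilinear_def)

lemma quad_trilinear_zero:
  "quad_trilinear a 0 y w = 0" "quad_trilinear a x 0 w = 0" "quad_trilinear a x y 0 = 0"
  by (simp_all add: quad_trilinear_def)

lemma quad_trilinear_expand:
  "quad_trilinear a (s *s E + U) (s *s E + U) (s *s E + U) =
     s^3 * quad_trilinear a E E E
     + s^2 * (quad_trilinear a E E U + quad_trilinear a E U E + quad_trilinear a U E E)
     + s * (quad_trilinear a E U U + quad_trilinear a U E U + quad_trilinear a U U E)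
     + quad_trilinear a U U U"
  by (simp add: quad_trilinear_multilinear algebra_simps power2_eq_square power3_eq_cube)

lemma quad_bilinear_expand:
  "quad_bilinear a k (s *s E + U) (s *s E + U)
     = s^2 * quad_bilinear a k E E + s * (quad_bilinear a k E U + quad_bilinear a k U E)
       + quad_bilinear a k U U"
  by (simp add: quad_bilinear_bilinear algebra_simps power2_eq_square)

lemma cbil_quad_complex: "cbil z (quad_complex a z) = quad_trilinear a z z z"
  unfolding cbil_def quad_complex_def quad_trilinear_eq_sum quad_bilinear_def by simp

lemma quad_complex_nth: "quad_complex a z $ k = quad_bilinear a k z z"
  unfolding quad_complex_def quad_bilinear_def by simp

lemma quad_real_nth: "quad_real a x $ k = quad_bilinear a k x x"
  unfolding quad_real_def quad_bilinear_def by simp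

lemma inner_quad_real: "x \<bullet> quad_real a x = quad_trilinear a x x x"
  unfolding inner_vec_def quad_trilinear_eq_sum quad_real_nth by simp

lemma cbil_quad_complex_self:
  "cbil (quad_complex a z) (quad_complex a z) = (\<Sum>k\<in>UNIV. (quad_bilinear a k z z)^2)"
  unfolding cbil_def quad_complex_nth by (simp add: power2_eq_square)

lemma inner_quad_real_self:
  "quad_real a x \<bullet> quad_real a x = (\<Sum>k\<in>UNIV. (quad_bilinear a k x x)^2)"
  unfolding inner_vec_def quad_real_nth by (simp add: power2_eq_square)

lemma quad_trilinear_complexify:
  "quad_trilinear a (complexify x) (complexify y) (complexify w) = complex_of_real (quad_trilinear a x y w)"
  unfolding quad_trilinear_def complexify_def by simp

lemma quad_bilinear_complexify:
  "quad_bilinear a k (complexify y) (complexify w) = complex_of_real (quad_bilinear a k y w)"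
  unfolding quad_bilinear_def complexify_def by simp

lemma cbil_cone_point:
  fixes u e :: "real^'n::finite"
  assumes "u $ m = 0" "e = axis m 1"
  shows "cbil ((\<i> * complex_of_real (norm u)) *s complexify e + complexify u)
              ((\<i> * complex_of_real (norm u)) *s complexify e + complexify u) = 0"
proof -
  let ?s = "\<i> * complex_of_real (norm u)"
  have "cbil (?s *s complexify e + complexify u) (?s *s complexify e + complexify u)
      = (\<Sum>i\<in>UNIV. (if i = m then ?s^2 else 0) + complex_of_real ((u$i)^2))"
    unfolding cbil_def complexify_def assms(2)
    by (rule sum.cong) (auto simp: axis_def assms(1) power2_eq_square algebra_simps)
  also have "\<dots> = ?s^2 + complex_of_real (\<Sum>i\<in>UNIV. (u$i)^2)"
    by (simp add: sum.distrib)
  also have "(\<Sum>i\<in>UNIV. (u$i)^2) = (norm u)^2"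
    unfolding power2_norm_eq_inner inner_vec_def by (simp add: power2_eq_square)
  also have "?s^2 = - complex_of_real ((norm u)^2)" by (simp add: power_mult_distrib)
  finally show ?thesis by simp
qed

lemma axis_decomposition:
  fixes x :: "real^'n::finite" and m :: 'n
  defines "e \<equiv> axis m 1" and "u \<equiv> x - (x$m) *s axis m 1"
  shows "x = (x$m) *s e + u" "u $ m = 0" "x \<bullet> x = (x$m)^2 + u \<bullet> u"
proof -
  show "x = (x$m) *s e + u" unfolding u_def e_def by simp
  show um: "u $ m = 0" unfolding u_def by simp
  have "x \<bullet> x = ((x$m) *s e + u) \<bullet> ((x$m) *s e + u)" using \<open>x = _\<close> by simp
  also have "\<dots> = (x$m)^2 * (e \<bullet> e) + 2 * (x$m) * (e \<bullet> u) + u \<bullet> u"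
    by (simp add: scalar_mult_eq_scaleR inner_add_left inner_add_right inner_commute
        power2_eq_square algebra_simps)
  also have "e \<bullet> e = 1" unfolding e_def by (simp add: inner_axis_axis)
  also have "e \<bullet> u = 0" unfolding e_def using um by (simp add: inner_axis')
  finally show "x \<bullet> x = (x$m)^2 + u \<bullet> u" by simp
qed

text \<open>Divisibility by (x, x) is read off on the plane spanned by a coordinate vector e and a
  vector u orthogonal to e: the point i |u| e + u lies on the complex cone, and the real and
  imaginary parts of the hypothesis at that point are the following relations.\<close>

lemma inner_quad_real_cone_relations:
  fixes u :: "real^'n::finite"
  assumes H: "\<forall>z::complex^'n. cbil z z = 0 \<longrightarrow> cbil z (quad_complex a z) = 0" and "u $ m = 0"
  defines "e \<equiv> axis m 1"
  shows "quad_trilinear a u u u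
      = (u \<bullet> u) * (quad_trilinear a e e u + quad_trilinear a e u e + quad_trilinear a u e e)"
    and "quad_trilinear a e u u + quad_trilinear a u e u + quad_trilinear a u u e
      = (u \<bullet> u) * quad_trilinear a e e e"
proof -
  define r where "r = norm u"
  define s where "s = \<i> * complex_of_real r"
  define A where "A = quad_trilinear a e e e"
  define B where "B = quad_trilinear a e e u + quad_trilinear a e u e + quad_trilinear a u e e"
  define C where "C = quad_trilinear a e u u + quad_trilinear a u e u + quad_trilinear a u u e"
  define D where "D = quad_trilinear a u u u"
  have "cbil (s *s complexify e + complexify u) (s *s complexify e + complexify u) = 0"
    unfolding s_def r_def by (rule cbil_cone_point[OF \<open>u $ m = 0\<close>]) (simp add: e_def)
  then have "quad_trilinear a (s *s complexify e + complexify u) (s *s complexify e + complexify u)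
      (s *s complexify e + complexify u) = 0"
    using H unfolding cbil_quad_complex by blast
  then have "s^3 * complex_of_real A + s^2 * complex_of_real B + s * complex_of_real C
      + complex_of_real D = 0"
    unfolding quad_trilinear_expand A_def B_def C_def D_def by (simp add: quad_trilinear_complexify)
  moreover have "s^2 = - complex_of_real (r^2)" "s^3 = - \<i> * complex_of_real (r^3)"
    unfolding s_def
    by (simp_all add: power_mult_distrib power3_eq_cube algebra_simps complex_i_mult_minus)
  ultimately have isotropic:
    "complex_of_real (D - r^2 * B) + \<i> * complex_of_real (r * C - r^3 * A) = 0"
    by (simp add: algebra_simps, simp add: s_def algebra_simps)
  have D: "D = r^2 * B" and C: "r * C = r^3 * A"
    using arg_cong[where f=Re, OF isotropic] arg_cong[where f=Im, OF isotropic] by simp_all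
  have uu: "u \<bullet> u = r^2" unfolding r_def by (simp add: power2_norm_eq_inner)
  show "quad_trilinear a u u u
      = (u \<bullet> u) * (quad_trilinear a e e u + quad_trilinear a e u e + quad_trilinear a u e e)"
    using D unfolding uu D_def B_def .
  show "quad_trilinear a e u u + quad_trilinear a u e u + quad_trilinear a u u e
      = (u \<bullet> u) * quad_trilinear a e e e"
  proof (cases "r = 0")
    case True
    then show ?thesis by (simp add: r_def quad_trilinear_zero)
  next
    case False
    then show ?thesis
      using C unfolding uu C_def A_def by (simp add: power2_eq_square power3_eq_cube)
  qed
qed

lemma inner_quad_real_factor:
  fixes x :: "real^'n::finite" and m :: 'n
  assumes H: "\<forall>z::complex^'n. cbil z z = 0 \<longrightarrow> cbil z (quad_complex a z) = 0"
  defines "e \<equiv> axis m 1" and "u \<equiv> x - (x$m) *s axis m 1"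
  shows "quad_trilinear a x x x = (x \<bullet> x) * (quad_trilinear a e e e * x$m
      + (quad_trilinear a e e u + quad_trilinear a e u e + quad_trilinear a u e e))"
proof -
  define t where "t = x$m"
  have x: "x = t *s e + u" and "u $ m = 0" and xx: "x \<bullet> x = t^2 + u \<bullet> u"
    using axis_decomposition[of x m] unfolding e_def u_def t_def by auto
  note rel = inner_quad_real_cone_relations[OF H \<open>u $ m = 0\<close>, folded e_def]
  have "quad_trilinear a x x x = t^3 * quad_trilinear a e e e
      + t^2 * (quad_trilinear a e e u + quad_trilinear a e u e + quad_trilinear a u e e)
      + t * (quad_trilinear a e u u + quad_trilinear a u e u + quad_trilinear a u u e)
      + quad_trilinear a u u u"
    by (subst x)+ (rule quad_trilinear_expand)
  then show ?thesis
    unfolding rel xx t_def by (simp add: algebra_simps power2_eq_square power3_eq_cube)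
qed

lemma norm_quad_real_cone_relations:
  fixes u :: "real^'n::finite"
  assumes H: "\<forall>z::complex^'n. cbil z z = 0 \<longrightarrow> cbil (quad_complex a z) (quad_complex a z) = 0"
    and "u $ m = 0"
  defines "\<alpha> \<equiv> \<lambda>k. quad_bilinear a k (axis m 1) (axis m 1)"
    and "\<beta> \<equiv> \<lambda>k. quad_bilinear a k (axis m 1) u + quad_bilinear a k u (axis m 1)"
    and "\<gamma> \<equiv> \<lambda>k. quad_bilinear a k u u"
  shows "(\<Sum>k\<in>UNIV. (\<gamma> k - (u \<bullet> u) * \<alpha> k)^2) = (u \<bullet> u) * (\<Sum>k\<in>UNIV. (\<beta> k)^2)"
    and "(\<Sum>k\<in>UNIV. (\<gamma> k - (u \<bullet> u) * \<alpha> k) * \<beta> k) = 0"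
proof -
  define e :: "real^'n" where "e = axis m 1"
  define r where "r = norm u"
  define s where "s = \<i> * complex_of_real r"
  have uu: "u \<bullet> u = r^2" unfolding r_def by (simp add: power2_norm_eq_inner)
  have "cbil (s *s complexify e + complexify u) (s *s complexify e + complexify u) = 0"
    unfolding s_def r_def by (rule cbil_cone_point[OF \<open>u $ m = 0\<close>]) (simp add: e_def)
  then have "(\<Sum>k\<in>UNIV. (quad_bilinear a k (s *s complexify e + complexify u)
      (s *s complexify e + complexify u))^2) = 0"
    using H unfolding cbil_quad_complex_self by blast
  moreover have "quad_bilinear a k (s *s complexify e + complexify u) (s *s complexify e + complexify u)
      = complex_of_real (\<gamma> k - r^2 * \<alpha> k) + \<i> * complex_of_real (r * \<beta> k)" for k
  proof -
    have "s^2 = - complex_of_real (r^2)" unfolding s_def by (simp add: power_mult_distrib)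
    then show ?thesis
      unfolding quad_bilinear_expand \<alpha>_def \<beta>_def \<gamma>_def e_def quad_bilinear_complexify
      by (simp add: algebra_simps s_def)
  qed
  ultimately have isotropic:
    "(\<Sum>k\<in>UNIV. (complex_of_real (\<gamma> k - r^2 * \<alpha> k) + \<i> * complex_of_real (r * \<beta> k))^2) = 0"
    by simp
  have Re_Im: "Re ((complex_of_real p + \<i> * complex_of_real q)^2) = p^2 - q^2"
    "Im ((complex_of_real p + \<i> * complex_of_real q)^2) = 2 * p * q" for p q
    by (simp_all add: power2_eq_square)
  have Re: "(\<Sum>k\<in>UNIV. (\<gamma> k - r^2 * \<alpha> k)^2 - (r * \<beta> k)^2) = 0"
    using arg_cong[where f=Re, OF isotropic] unfolding Re_sum Re_Im by simp
  have Im: "(\<Sum>k\<in>UNIV. 2 * (\<gamma> k - r^2 * \<alpha> k) * (r * \<beta> k)) = 0"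
    using arg_cong[where f=Im, OF isotropic] unfolding Im_sum Re_Im by simp
  show "(\<Sum>k\<in>UNIV. (\<gamma> k - (u \<bullet> u) * \<alpha> k)^2) = (u \<bullet> u) * (\<Sum>k\<in>UNIV. (\<beta> k)^2)"
    using Re unfolding uu by (simp add: sum_subtractf sum_distrib_left power_mult_distrib)
  show "(\<Sum>k\<in>UNIV. (\<gamma> k - (u \<bullet> u) * \<alpha> k) * \<beta> k) = 0"
  proof (cases "r = 0")
    case True
    then show ?thesis by (simp add: r_def \<beta>_def quad_bilinear_zero)
  next
    case False
    have "(\<Sum>k\<in>UNIV. 2 * (\<gamma> k - r^2 * \<alpha> k) * (r * \<beta> k)) = 2 * r * (\<Sum>k\<in>UNIV. (\<gamma> k - r^2 * \<alpha> k) * \<beta> k)"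
      by (simp add: sum_distrib_left algebra_simps)
    then show ?thesis using Im False unfolding uu by simp
  qed
qed

lemma norm_quad_real_factor:
  fixes x :: "real^'n::finite" and m :: 'n
  assumes H: "\<forall>z::complex^'n. cbil z z = 0 \<longrightarrow> cbil (quad_complex a z) (quad_complex a z) = 0"
  defines "e \<equiv> axis m 1" and "u \<equiv> x - (x$m) *s axis m 1"
  shows "(\<Sum>k\<in>UNIV. (quad_bilinear a k x x)^2) = (x \<bullet> x) *
     ((x \<bullet> x) * (\<Sum>k\<in>UNIV. (quad_bilinear a k e e)^2)
      + (\<Sum>k\<in>UNIV. (quad_bilinear a k e u + quad_bilinear a k u e)^2)
      + 2 * x$m * (\<Sum>k\<in>UNIV. quad_bilinear a k e e * (quad_bilinear a k e u + quad_bilinear a k u e))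
      + 2 * (\<Sum>k\<in>UNIV. quad_bilinear a k e e * quad_bilinear a k u u)
      - 2 * (u \<bullet> u) * (\<Sum>k\<in>UNIV. (quad_bilinear a k e e)^2))"
proof -
  define t where "t = x$m"
  define \<alpha> where "\<alpha> k = quad_bilinear a k e e" for k
  define \<beta> where "\<beta> k = quad_bilinear a k e u + quad_bilinear a k u e" for k
  define \<gamma> where "\<gamma> k = quad_bilinear a k u u" for k
  have x: "x = t *s e + u" and "u $ m = 0" and xx: "x \<bullet> x = t^2 + u \<bullet> u"
    using axis_decomposition[of x m] unfolding e_def u_def t_def by auto
  note rel = norm_quad_real_cone_relations[OF H \<open>u $ m = 0\<close>, folded e_def, folded \<alpha>_def \<beta>_def \<gamma>_def]
  have "quad_bilinear a k x x = t^2 * \<alpha> k + t * \<beta> k + \<gamma> k" for k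
    unfolding \<alpha>_def \<beta>_def \<gamma>_def by (subst x)+ (rule quad_bilinear_expand)
  then have "(\<Sum>k\<in>UNIV. (quad_bilinear a k x x)^2)
      = (\<Sum>k\<in>UNIV. (t^2 + u \<bullet> u)^2 * (\<alpha> k)^2 + (t^2 + u \<bullet> u) * (\<beta> k)^2
          + 2 * t * (t^2 + u \<bullet> u) * (\<alpha> k * \<beta> k) + 2 * (t^2 + u \<bullet> u) * (\<alpha> k * \<gamma> k)
          - 2 * (t^2 + u \<bullet> u) * (u \<bullet> u) * (\<alpha> k)^2
          + ((\<gamma> k - (u \<bullet> u) * \<alpha> k)^2 - (u \<bullet> u) * (\<beta> k)^2)
          + 2 * t * ((\<gamma> k - (u \<bullet> u) * \<alpha> k) * \<beta> k))"
    by (intro sum.cong) (simp_all add: power2_eq_square algebra_simps)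
  also have "\<dots> = (t^2 + u \<bullet> u)^2 * (\<Sum>k\<in>UNIV. (\<alpha> k)^2) + (t^2 + u \<bullet> u) * (\<Sum>k\<in>UNIV. (\<beta> k)^2)
      + 2 * t * (t^2 + u \<bullet> u) * (\<Sum>k\<in>UNIV. \<alpha> k * \<beta> k) + 2 * (t^2 + u \<bullet> u) * (\<Sum>k\<in>UNIV. \<alpha> k * \<gamma> k)
      - 2 * (t^2 + u \<bullet> u) * (u \<bullet> u) * (\<Sum>k\<in>UNIV. (\<alpha> k)^2)
      + ((\<Sum>k\<in>UNIV. (\<gamma> k - (u \<bullet> u) * \<alpha> k)^2) - (u \<bullet> u) * (\<Sum>k\<in>UNIV. (\<beta> k)^2))
      + 2 * t * (\<Sum>k\<in>UNIV. (\<gamma> k - (u \<bullet> u) * \<alpha> k) * \<beta> k)"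
    by (simp only: sum.distrib sum_subtractf sum_distrib_left)
  also have "\<dots> = (x \<bullet> x) * ((x \<bullet> x) * (\<Sum>k\<in>UNIV. (\<alpha> k)^2) + (\<Sum>k\<in>UNIV. (\<beta> k)^2)
      + 2 * t * (\<Sum>k\<in>UNIV. \<alpha> k * (\<beta> k)) + 2 * (\<Sum>k\<in>UNIV. \<alpha> k * \<gamma> k)
      - 2 * (u \<bullet> u) * (\<Sum>k\<in>UNIV. (\<alpha> k)^2))"
    unfolding rel xx by (simp add: power2_eq_square algebra_simps)
  finally show ?thesis
    unfolding t_def \<alpha>_def \<beta>_def \<gamma>_def .
qed

lemma smooth_on_quad_bilinear:
  fixes g h :: "_ \<Rightarrow> real^'n::finite"
  assumes "smooth_on U g" "smooth_on U h"
  shows "smooth_on U (\<lambda>x. quad_bilinear a k (g x) (h x))"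
  unfolding quad_bilinear_def
  by (intro smooth_on_sum smooth_on_mult smooth_on_const smooth_on_vec_nth assms) auto

lemma smooth_on_quad_real: "smooth_on U (quad_real a)"
proof -
  have "quad_real a = (\<lambda>x. \<chi> k. quad_bilinear a k x x)"
    by (simp add: fun_eq_iff vec_eq_iff quad_real_nth)
  then show ?thesis
    by (simp add: smooth_on_vec_lambda smooth_on_quad_bilinear smooth_on_id)
qed

lemma quad_real_scaleR: "quad_real a (t *\<^sub>R x) = t^2 *\<^sub>R quad_real a x"
  unfolding quad_real_def by (simp add: vec_eq_iff sum_distrib_left power2_eq_square algebra_simps)

lemma quad_real_bound:
  "norm (quad_real a x) \<le> (\<Sum>k\<in>UNIV. \<Sum>i\<in>UNIV. \<Sum>j\<in>UNIV. \<bar>a k i j\<bar>) * (norm x)^2"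
proof -
  have "norm (quad_real a x) \<le> (\<Sum>k\<in>UNIV. \<bar>quad_real a x $ k\<bar>)" by (rule norm_le_l1_cart)
  also have "\<dots> \<le> (\<Sum>k\<in>UNIV. (\<Sum>i\<in>UNIV. \<Sum>j\<in>UNIV. \<bar>a k i j\<bar>) * (norm x)^2)"
  proof (rule sum_mono)
    fix k
    have "\<bar>quad_real a x $ k\<bar> \<le> (\<Sum>i\<in>UNIV. \<Sum>j\<in>UNIV. \<bar>a k i j * x$i * x$j\<bar>)"
      unfolding quad_real_def by (simp, rule order_trans[OF sum_abs], rule sum_mono, rule sum_abs)
    also have "\<dots> \<le> (\<Sum>i\<in>UNIV. \<Sum>j\<in>UNIV. \<bar>a k i j\<bar> * (norm x)^2)"
    proof (intro sum_mono)
      fix i j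
      have "\<bar>x$i\<bar> * \<bar>x$j\<bar> \<le> norm x * norm x"
        by (intro mult_mono component_le_norm_cart) auto
      then show "\<bar>a k i j * x$i * x$j\<bar> \<le> \<bar>a k i j\<bar> * (norm x)^2"
        by (simp add: abs_mult power2_eq_square mult.assoc mult_left_mono)
    qed
    also have "\<dots> = (\<Sum>i\<in>UNIV. \<Sum>j\<in>UNIV. \<bar>a k i j\<bar>) * (norm x)^2"
      by (simp add: sum_distrib_right)
    finally show "\<bar>quad_real a x $ k\<bar> \<le> (\<Sum>i\<in>UNIV. \<Sum>j\<in>UNIV. \<bar>a k i j\<bar>) * (norm x)^2" .
  qed
  also have "\<dots> = (\<Sum>k\<in>UNIV. \<Sum>i\<in>UNIV. \<Sum>j\<in>UNIV. \<bar>a k i j\<bar>) * (norm x)^2"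
    by (simp add: sum_distrib_right)
  finally show ?thesis .
qed

lemma inner_quad_real_divisible:
  fixes a :: "'n::finite \<Rightarrow> 'n \<Rightarrow> 'n \<Rightarrow> real"
  assumes "\<forall>z::complex^'n. cbil z z = 0 \<longrightarrow> cbil z (quad_complex a z) = 0"
  obtains \<mu> :: "real^'n \<Rightarrow> real" where "linear \<mu>" "\<And>x. x \<bullet> quad_real a x = (x \<bullet> x) * \<mu> x"
proof
  fix m :: 'n
  define e where "e = (axis m 1 :: real^'n)"
  define u where "u x = x - (x$m) *s e" for x :: "real^'n"
  have u_add: "u (x + y) = u x + u y" and u_scale: "u (c *\<^sub>R x) = c *s u x" for x y c
    by (simp_all add: u_def vec_eq_iff algebra_simps)
  show "linear (\<lambda>x. quad_trilinear a e e e * x$m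
      + (quad_trilinear a e e (u x) + quad_trilinear a e (u x) e + quad_trilinear a (u x) e e))"
    by (rule linearI) (simp_all add: u_add u_scale quad_trilinear_multilinear algebra_simps)
  show "x \<bullet> quad_real a x = (x \<bullet> x) * (quad_trilinear a e e e * x$m
      + (quad_trilinear a e e (u x) + quad_trilinear a e (u x) e + quad_trilinear a (u x) e e))" for x
    using inner_quad_real_factor[OF assms, of x m] by (simp add: inner_quad_real e_def u_def)
qed

lemma norm_quad_real_divisible:
  fixes a :: "'n::finite \<Rightarrow> 'n \<Rightarrow> 'n \<Rightarrow> real"
  assumes "\<forall>z::complex^'n. cbil z z = 0 \<longrightarrow> cbil (quad_complex a z) (quad_complex a z) = 0"
  obtains q :: "real^'n \<Rightarrow> real"
  where "smooth_on UNIV q" "q 0 = 0" "\<And>x. quad_real a x \<bullet> quad_real a x = (x \<bullet> x) * q x"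
proof
  fix m :: 'n
  define e where "e = (axis m 1 :: real^'n)"
  define u where "u x = x - (x$m) *s e" for x :: "real^'n"
  define q where "q x = (x \<bullet> x) * (\<Sum>k\<in>UNIV. (quad_bilinear a k e e)^2)
      + (\<Sum>k\<in>UNIV. (quad_bilinear a k e (u x) + quad_bilinear a k (u x) e)^2)
      + 2 * x$m * (\<Sum>k\<in>UNIV. quad_bilinear a k e e * (quad_bilinear a k e (u x) + quad_bilinear a k (u x) e))
      + 2 * (\<Sum>k\<in>UNIV. quad_bilinear a k e e * quad_bilinear a k (u x) (u x))
      - 2 * (u x \<bullet> u x) * (\<Sum>k\<in>UNIV. (quad_bilinear a k e e)^2)" for x
  have u: "smooth_on UNIV u"
    unfolding u_def scalar_mult_eq_scaleR
    by (intro smooth_on_diff smooth_on_scaleR smooth_on_id smooth_on_vec_nth smooth_on_const)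
  show "smooth_on UNIV q"
    unfolding q_def power2_eq_square
    by (intro smooth_on_add smooth_on_diff smooth_on_mult smooth_on_sum smooth_on_const smooth_on_inner
        smooth_on_quad_bilinear smooth_on_vec_nth smooth_on_id u) auto
  show "q 0 = 0"
    by (simp add: q_def u_def quad_bilinear_zero)
  show "quad_real a x \<bullet> quad_real a x = (x \<bullet> x) * q x" for x
    using norm_quad_real_factor[OF assms, of x m] unfolding inner_quad_real_self q_def u_def e_def .
qed

section \<open>Inversion of lines\<close>

lemma round_circle_memberI:
  fixes c u w :: "real^'n::finite"
  assumes "\<alpha>^2 + \<beta>^2 = r^2" "r > 0"
  shows "c + \<alpha> *\<^sub>R u + \<beta> *\<^sub>R w \<in> {c + (r * cos \<theta>) *\<^sub>R u + (r * sin \<theta>) *\<^sub>R w | \<theta>. True}"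
proof -
  have "(\<alpha> / r)^2 + (\<beta> / r)^2 = 1"
    using assms by (simp add: power_divide add_divide_distrib[symmetric])
  then obtain \<theta> where "\<alpha> / r = cos \<theta>" "\<beta> / r = sin \<theta>"
    using sincos_total_2pi by metis
  then have "\<alpha> = r * cos \<theta>" "\<beta> = r * sin \<theta>"
    using assms(2) by (simp_all add: field_simps)
  then show ?thesis by (intro CollectI exI[of _ \<theta>]) simp
qed

lemma circle_through_origin_memberI:
  fixes u w :: "real^'n::finite"
  assumes "R > 0" "X^2 + Y^2 > 0"
  shows "(2 * R * Y / (X^2 + Y^2)) *\<^sub>R (X *\<^sub>R u + Y *\<^sub>R w)
    \<in> {R *\<^sub>R w + (R * cos \<theta>) *\<^sub>R u + (R * sin \<theta>) *\<^sub>R w | \<theta>. True}"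
proof -
  define N where "N = X^2 + Y^2"
  have N: "N > 0" using assms(2) by (simp add: N_def)
  have "(2 * R * Y / N * X)^2 + (2 * R * Y / N * Y - R)^2
      = (2 * R * Y)^2 * (X^2 + Y^2) / N^2 - (2 * R * Y)^2 / N + R^2"
    using N by (simp add: power2_eq_square field_simps)
  also have "\<dots> = R^2"
    using N unfolding N_def[symmetric] by (simp add: power2_eq_square field_simps)
  finally have "R *\<^sub>R w + (2 * R * Y / N * X) *\<^sub>R u + (2 * R * Y / N * Y - R) *\<^sub>R w
      \<in> {R *\<^sub>R w + (R * cos \<theta>) *\<^sub>R u + (R * sin \<theta>) *\<^sub>R w | \<theta>. True}"
    using assms(1) by (rule round_circle_memberI)
  then show ?thesis
    by (simp add: N_def algebra_simps)
qed

text \<open>Up to the factor |v|^2, the curve below is the image of the line s \<mapsto> s v + w under the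
  inversion y \<mapsto> y / |y|^2 (put s = 1/t), hence lies on a circle through 0.\<close>

lemma inverted_line_in_circle:
  fixes v w :: "real^'n::finite"
  assumes "v \<noteq> 0"
  shows "\<exists>S. is_circle S \<and> (\<forall>t. ((norm v)^2 / (norm (v + t *\<^sub>R w))^2 * t) *\<^sub>R (v + t *\<^sub>R w) \<in> S)"
proof -
  define A where "A = norm v"
  define vh where "vh = (1 / A) *\<^sub>R v"
  define b where "b = w \<bullet> vh"
  define d where "d = norm (w - b *\<^sub>R vh)"
  have A: "A > 0" using assms by (simp add: A_def)
  have v_eq: "v = A *\<^sub>R vh" using A by (simp add: vh_def)
  have vh: "norm vh = 1" "vh \<bullet> vh = 1" using assms by (simp_all add: vh_def A_def dot_square_norm)
  show ?thesis
  proof (cases "d = 0")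
    case True
    then have w_eq: "w = (b / A) *\<^sub>R v" using A by (simp add: d_def v_eq)
    have "K *\<^sub>R (v + t *\<^sub>R w) = (K * (1 + t * (b / A))) *\<^sub>R v" for K t
      unfolding w_eq by (simp add: algebra_simps)
    then have "((norm v)^2 / (norm (v + t *\<^sub>R w))^2 * t) *\<^sub>R (v + t *\<^sub>R w)
        \<in> {0 + s *\<^sub>R v | s. True}" for t
      by auto
    moreover have "is_circle {0 + s *\<^sub>R v | s. True}"
      unfolding is_circle_def using assms by blast
    ultimately show ?thesis by blast
  next
    case False
    then have d: "d > 0" by (simp add: d_def)
    define wh where "wh = (1 / d) *\<^sub>R (w - b *\<^sub>R vh)"
    have w_eq: "w = b *\<^sub>R vh + d *\<^sub>R wh" using d by (simp add: wh_def)
    have wh: "norm wh = 1" "wh \<bullet> wh = 1" using d by (simp_all add: wh_def d_def dot_square_norm)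
    have orth: "vh \<bullet> wh = 0" "wh \<bullet> vh = 0"
      by (simp_all add: wh_def b_def inner_diff_left inner_diff_right inner_commute vh(2))
    define R where "R = A^2 / (2 * d)"
    have R: "R > 0" using A d by (simp add: R_def)
    define S where "S = {R *\<^sub>R wh + (R * cos \<theta>) *\<^sub>R vh + (R * sin \<theta>) *\<^sub>R wh | \<theta>. True}"
    have "is_circle S"
      unfolding is_circle_def S_def
      by (rule disjI1, intro exI[of _ "R *\<^sub>R wh"] exI[of _ vh] exI[of _ wh] exI[of _ R])
         (simp add: vh wh orth R)
    moreover have "((norm v)^2 / (norm (v + t *\<^sub>R w))^2 * t) *\<^sub>R (v + t *\<^sub>R w) \<in> S" for t
    proof -
      define X where "X = A + t * b"
      define Y where "Y = t * d"
      have line: "v + t *\<^sub>R w = X *\<^sub>R vh + Y *\<^sub>R wh"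
        by (simp add: v_eq w_eq X_def Y_def algebra_simps)
      have "(norm (v + t *\<^sub>R w))^2 = X^2 + Y^2"
        unfolding line power2_norm_eq_inner
        by (simp add: inner_add_left inner_add_right vh wh orth power2_eq_square)
      moreover have "(norm v)^2 * t = 2 * R * Y"
        using d by (simp add: R_def Y_def A_def)
      moreover have "X^2 + Y^2 > 0"
        using A d by (cases "t = 0") (auto simp: X_def Y_def add_pos_nonneg add_nonneg_pos)
      ultimately show ?thesis
        unfolding S_def line using circle_through_origin_memberI[OF R] by simp
    qed
    ultimately show ?thesis by blast
  qed
qed

section \<open>The circle-preserving germ\<close>

lemma has_derivative_id_from_bound:
  fixes f :: "'a::real_normed_vector \<Rightarrow> 'a"
  assumes "f 0 = 0" and bound: "eventually (\<lambda>x. norm (f x - x) \<le> K * norm x ^ 2) (at 0)"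
  shows "(f has_derivative id) (at 0)"
proof -
  have "((\<lambda>y. norm (f y - f 0 - id (y - 0)) / norm (y - 0)) \<longlongrightarrow> 0) (at 0)"
  proof (rule tendsto_sandwich[where f="\<lambda>_. 0" and h="\<lambda>y. \<bar>K\<bar> * norm y"])
    show "\<forall>\<^sub>F y in at 0. norm (f y - f 0 - id (y - 0)) / norm (y - 0) \<le> \<bar>K\<bar> * norm y"
      using bound eventually_neq_at_within[of 0 0 UNIV]
    proof eventually_elim
      case (elim y)
      have "norm (f y - y) \<le> \<bar>K\<bar> * norm y * norm y"
        using elim(1) mult_right_mono[OF abs_ge_self[of K], of "norm y ^ 2"]
        by (simp add: power2_eq_square mult.assoc)
      then show ?case
        using elim(2) \<open>f 0 = 0\<close> by (simp add: divide_le_eq)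
    qed
    show "((\<lambda>y. \<bar>K\<bar> * norm y) \<longlongrightarrow> 0) (at 0)"
      by (auto intro!: tendsto_eq_intros)
  qed simp_all
  then show ?thesis
    unfolding has_derivative_iff_norm by (simp add: id_def bounded_linear_ident)
qed

locale circle_germ =
  fixes \<Gamma> :: "real^'n::finite \<Rightarrow> real^'n" and \<mu> q :: "real^'n \<Rightarrow> real" and c :: real
  assumes smooth_\<Gamma>: "smooth_on UNIV \<Gamma>"
    and \<Gamma>_scaleR: "\<And>t x. \<Gamma> (t *\<^sub>R x) = t^2 *\<^sub>R \<Gamma> x"
    and norm_\<Gamma>_le: "\<And>x. norm (\<Gamma> x) \<le> c * norm x ^ 2"
    and linear_\<mu>: "linear \<mu>"
    and smooth_q: "smooth_on UNIV q" and q_0: "q 0 = 0"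
    and inner_\<Gamma>: "\<And>x. x \<bullet> \<Gamma> x = (x \<bullet> x) * \<mu> x"
    and inner_\<Gamma>_\<Gamma>: "\<And>x. \<Gamma> x \<bullet> \<Gamma> x = (x \<bullet> x) * q x"
begin

definition W :: "real^'n \<Rightarrow> real^'n" where "W x = \<Gamma> x - (2 * \<mu> x) *\<^sub>R x"

definition E :: "real^'n \<Rightarrow> real" where "E x = 1 - 2 * \<mu> x + q x"

text \<open>By inner_add_W, for x \<noteq> 0 this is the map x \<mapsto> |x|^2 (x + W x) / |x + W x|^2; the
  denominator E makes it visibly smooth at 0.\<close>

definition \<Phi> :: "real^'n \<Rightarrow> real^'n" where "\<Phi> x = inverse (E x) *\<^sub>R (x + W x)"

lemma c_nonneg: "0 \<le> c"
  using order_trans[OF norm_ge_zero norm_\<Gamma>_le[of "axis undefined 1"]] by simp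

lemma \<mu>_scaleR: "\<mu> (t *\<^sub>R x) = t * \<mu> x"
  using linear_\<mu> by (simp add: linear_scale)

lemma \<mu>_0: "\<mu> 0 = 0"
  using \<mu>_scaleR[of 0 0] by simp

lemma \<Gamma>_0: "\<Gamma> 0 = 0"
  using \<Gamma>_scaleR[of 0 0] by simp

lemma inner_add_W: "(x + W x) \<bullet> (x + W x) = (x \<bullet> x) * E x"
proof -
  have "(x + W x) \<bullet> (x + W x) = x \<bullet> x + 2 * (x \<bullet> \<Gamma> x) - 4 * \<mu> x * (x \<bullet> x)
        + \<Gamma> x \<bullet> \<Gamma> x - 4 * \<mu> x * (x \<bullet> \<Gamma> x) + 4 * (\<mu> x)^2 * (x \<bullet> x)"
    unfolding W_def
    by (simp add: inner_add_left inner_add_right inner_diff_left inner_diff_right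
        inner_commute power2_eq_square algebra_simps)
  also have "\<dots> = (x \<bullet> x) * E x"
    unfolding inner_\<Gamma> inner_\<Gamma>_\<Gamma> E_def by (simp add: power2_eq_square algebra_simps)
  finally show ?thesis .
qed

lemma abs_\<mu>_le: "\<bar>\<mu> x\<bar> \<le> c * norm x"
proof (cases "x = 0")
  case True
  then show ?thesis by (simp add: \<mu>_0)
next
  case False
  have "norm x ^ 2 * \<bar>\<mu> x\<bar> = \<bar>x \<bullet> \<Gamma> x\<bar>"
    by (simp add: inner_\<Gamma> abs_mult power2_norm_eq_inner)
  also have "\<dots> \<le> norm x * norm (\<Gamma> x)"
    by (rule Cauchy_Schwarz_ineq2)
  also have "\<dots> \<le> norm x ^ 2 * (c * norm x)"
    using mult_left_mono[OF norm_\<Gamma>_le[of x] norm_ge_zero[of x]]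
    by (simp add: power2_eq_square algebra_simps)
  finally show ?thesis
    using False by simp
qed

lemma q_nonneg: "0 \<le> q x"
  and q_le: "q x \<le> c^2 * norm x ^ 2"
proof -
  have "0 \<le> q x \<and> q x \<le> c^2 * norm x ^ 2"
  proof (cases "x = 0")
    case True
    then show ?thesis by (simp add: q_0)
  next
    case False
    have sq: "norm x ^ 2 * q x = norm (\<Gamma> x) ^ 2"
      by (simp add: power2_norm_eq_inner inner_\<Gamma>_\<Gamma>)
    have "norm (\<Gamma> x) ^ 2 \<le> (c * norm x ^ 2) ^ 2"
      using norm_\<Gamma>_le[of x] by (intro power_mono) auto
    then have "norm x ^ 2 * q x \<le> norm x ^ 2 * (c^2 * norm x ^ 2)"
      unfolding sq by (simp add: power2_eq_square algebra_simps)
    moreover have "0 \<le> norm x ^ 2 * q x"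
      unfolding sq by simp
    ultimately show ?thesis
      using False by (simp add: zero_le_mult_iff)
  qed
  then show "0 \<le> q x" "q x \<le> c^2 * norm x ^ 2" by auto
qed

definition radius :: real where "radius = 1 / (4 * c + 1)"

lemma radius_pos: "0 < radius" and radius_le_1: "radius \<le> 1"
  using c_nonneg by (auto simp: radius_def)

lemma E_ge_half:
  assumes "norm x \<le> radius"
  shows "1/2 \<le> E x"
proof -
  have "c * norm x \<le> c * radius"
    using assms c_nonneg by (rule mult_left_mono)
  also have "\<dots> \<le> 1/4"
    using c_nonneg by (simp add: radius_def field_simps)
  finally show ?thesis
    using abs_\<mu>_le[of x] q_nonneg[of x] unfolding E_def by linarith
qed

lemma \<Phi>_0: "\<Phi> 0 = 0"
  by (simp add: \<Phi>_def W_def \<Gamma>_0)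

lemma \<Phi>_remainder:
  assumes "E x \<noteq> 0"
  shows "\<Phi> x - x - \<Gamma> x = inverse (E x) *\<^sub>R ((2 * \<mu> x) *\<^sub>R \<Gamma> x - q x *\<^sub>R x - q x *\<^sub>R \<Gamma> x)"
proof -
  have "E x *\<^sub>R (\<Phi> x - x - \<Gamma> x) = (x + W x) - E x *\<^sub>R (x + \<Gamma> x)"
    using assms by (simp add: \<Phi>_def scaleR_diff_right scaleR_add_right)
  also have "\<dots> = (2 * \<mu> x) *\<^sub>R \<Gamma> x - q x *\<^sub>R x - q x *\<^sub>R \<Gamma> x"
    by (simp add: W_def E_def algebra_simps)
  finally have eq: "E x *\<^sub>R (\<Phi> x - x - \<Gamma> x) = (2 * \<mu> x) *\<^sub>R \<Gamma> x - q x *\<^sub>R x - q x *\<^sub>R \<Gamma> x" .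
  have "\<Phi> x - x - \<Gamma> x = inverse (E x) *\<^sub>R (E x *\<^sub>R (\<Phi> x - x - \<Gamma> x))"
    using assms by simp
  then show ?thesis
    unfolding eq .
qed

lemma norm_\<Phi>_remainder_le:
  assumes "norm x \<le> radius"
  shows "norm (\<Phi> x - x - \<Gamma> x) \<le> 2 * (3 * c^2 + c^3) * norm x ^ 3"
proof -
  define n where "n = norm x"
  have n: "0 \<le> n" "n \<le> 1" using assms radius_le_1 by (auto simp: n_def)
  have E: "1/2 \<le> E x" using assms by (rule E_ge_half)
  have "norm ((2 * \<mu> x) *\<^sub>R \<Gamma> x) \<le> 2 * ((c * n) * (c * n^2))"
    using mult_mono[OF abs_\<mu>_le[of x] norm_\<Gamma>_le[of x]] c_nonneg by (simp add: n_def abs_mult)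
  moreover have "norm (q x *\<^sub>R x) \<le> (c^2 * n^2) * n"
    using q_nonneg q_le by (simp add: n_def mult_right_mono)
  moreover have "norm (q x *\<^sub>R \<Gamma> x) \<le> (c^2 * n^2) * (c * n^2)"
    using mult_mono[OF q_le[of x] norm_\<Gamma>_le[of x]] q_nonneg[of x] c_nonneg by (simp add: n_def)
  moreover have "(c^2 * n^2) * (c * n^2) \<le> c^3 * n^3"
  proof -
    have "(c^2 * n^2) * (c * n^2) = (c^3 * n^3) * n"
      by (simp add: power2_eq_square power3_eq_cube)
    also have "\<dots> \<le> c^3 * n^3"
      using n c_nonneg by (simp add: mult_left_le)
    finally show ?thesis .
  qed
  ultimately have R: "norm ((2 * \<mu> x) *\<^sub>R \<Gamma> x - q x *\<^sub>R x - q x *\<^sub>R \<Gamma> x) \<le> (3 * c^2 + c^3) * n^3"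
    using norm_triangle_ineq4[of "(2 * \<mu> x) *\<^sub>R \<Gamma> x - q x *\<^sub>R x" "q x *\<^sub>R \<Gamma> x"]
      norm_triangle_ineq4[of "(2 * \<mu> x) *\<^sub>R \<Gamma> x" "q x *\<^sub>R x"]
    by (simp add: power2_eq_square power3_eq_cube algebra_simps)
  have "norm (\<Phi> x - x - \<Gamma> x)
      = inverse (E x) * norm ((2 * \<mu> x) *\<^sub>R \<Gamma> x - q x *\<^sub>R x - q x *\<^sub>R \<Gamma> x)"
    using E \<Phi>_remainder[of x] by simp
  also have "\<dots> \<le> 2 * ((3 * c^2 + c^3) * n^3)"
    using le_imp_inverse_le[OF E] E by (intro mult_mono R) auto
  finally show ?thesis
    by (simp add: n_def algebra_simps)
qed

lemma eventually_norm_le_radius: "eventually (\<lambda>x. norm x \<le> radius) (at (0::real^'n))"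
  unfolding eventually_at using radius_pos by (auto intro!: exI[of _ radius] simp: dist_norm)

lemma \<Phi>_has_derivative_id: "(\<Phi> has_derivative id) (at 0)"
proof (rule has_derivative_id_from_bound[where f=\<Phi>, OF \<Phi>_0])
  show "eventually (\<lambda>x. norm (\<Phi> x - x) \<le> (2 * (3 * c^2 + c^3) + c) * norm x ^ 2) (at 0)"
    using eventually_norm_le_radius
  proof eventually_elim
    case (elim x)
    have "norm (\<Phi> x - x) \<le> norm (\<Phi> x - x - \<Gamma> x) + norm (\<Gamma> x)"
      using norm_triangle_ineq[of "\<Phi> x - x - \<Gamma> x" "\<Gamma> x"] by simp
    also have "\<dots> \<le> 2 * (3 * c^2 + c^3) * norm x ^ 3 + c * norm x ^ 2"
      using norm_\<Phi>_remainder_le[OF elim] norm_\<Gamma>_le[of x] by simp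
    also have "2 * (3 * c^2 + c^3) * norm x ^ 3 \<le> 2 * (3 * c^2 + c^3) * norm x ^ 2"
      using elim radius_le_1 c_nonneg by (intro mult_left_mono power_decreasing) auto
    finally show ?case
      by (simp add: algebra_simps)
  qed
qed

lemma smooth_on_\<mu>: "smooth_on U \<mu>"
  using linear_\<mu> by (simp add: smooth_on_linear linear_conv_bounded_linear)

lemma smooth_on_E: "smooth_on U E"
proof -
  have "smooth_on UNIV E"
    unfolding E_def[abs_def]
    by (intro smooth_on_add smooth_on_diff smooth_on_mult smooth_on_const smooth_q smooth_on_\<mu>)
  then show ?thesis by (rule smooth_on_subset) simp
qed

lemma open_E_pos: "open {x. 0 < E x}"
  using smooth_on_imp_continuous_on[OF smooth_on_E]
  by (intro open_Collect_less) (auto simp: continuous_on_const)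

lemma smooth_on_\<Phi>: "smooth_on {x. 0 < E x} \<Phi>"
proof -
  have "smooth_on UNIV (\<lambda>x. x + W x)"
    unfolding W_def by (intro smooth_on_add smooth_on_diff smooth_on_scaleR smooth_on_mult smooth_on_const
        smooth_on_id smooth_\<Gamma> smooth_on_\<mu>)
  then have "smooth_on {x. 0 < E x} (\<lambda>x. x + W x)"
    by (rule smooth_on_subset) simp
  moreover have "smooth_on {x. 0 < E x} (\<lambda>x. inverse (E x))"
    by (rule smooth_on_inverse[OF smooth_on_E]) simp
  ultimately show ?thesis
    unfolding \<Phi>_def[abs_def] by (rule smooth_on_scaleR[rotated])
qed

lemma \<Phi>_on_line:
  assumes "v \<noteq> 0"
  shows "\<Phi> (t *\<^sub>R v) = ((norm v)^2 / (norm (v + t *\<^sub>R W v))^2 * t) *\<^sub>R (v + t *\<^sub>R W v)"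
proof (cases "t = 0")
  case True
  then show ?thesis by (simp add: \<Phi>_0)
next
  case False
  have line: "t *\<^sub>R v + W (t *\<^sub>R v) = t *\<^sub>R (v + t *\<^sub>R W v)"
    by (simp add: W_def \<Gamma>_scaleR \<mu>_scaleR algebra_simps power2_eq_square)
  have "t^2 * ((v + t *\<^sub>R W v) \<bullet> (v + t *\<^sub>R W v)) = t^2 * (v \<bullet> v) * E (t *\<^sub>R v)"
    using inner_add_W[of "t *\<^sub>R v"] unfolding line by (simp add: power2_eq_square)
  then have "E (t *\<^sub>R v) = (norm (v + t *\<^sub>R W v))^2 / (norm v)^2"
    using False assms by (simp add: power2_norm_eq_inner field_simps)
  then show ?thesis
    unfolding \<Phi>_def line by (simp add: inverse_divide)
qed

lemma \<Phi>_line_in_circle: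
  assumes "v \<noteq> 0"
  shows "\<exists>S. is_circle S \<and> \<Phi> ` {t *\<^sub>R v | t. True} \<subseteq> S"
proof -
  obtain S where "is_circle S"
    and "\<forall>t. ((norm v)^2 / (norm (v + t *\<^sub>R W v))^2 * t) *\<^sub>R (v + t *\<^sub>R W v) \<in> S"
    using inverted_line_in_circle[OF assms] by metis
  then show ?thesis
    by (auto simp: \<Phi>_on_line[OF assms])
qed

theorem circle_germ_exists:
  "\<exists>(\<Phi>::real^'n \<Rightarrow> real^'n) U V \<Psi>.
     open U \<and> 0 \<in> U \<and> open V \<and> \<Phi> ` U = V \<and>
     smooth_on U \<Phi> \<and> smooth_on V \<Psi> \<and>
     (\<forall>x\<in>U. \<Psi> (\<Phi> x) = x) \<and> (\<forall>y\<in>V. \<Phi> (\<Psi> y) = y) \<and>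
     \<Phi> 0 = 0 \<and> (\<Phi> has_derivative id) (at 0) \<and>
     (\<exists>C. eventually (\<lambda>x. norm (\<Phi> x - x - \<Gamma> x) \<le> C * norm x ^ 3) (at 0)) \<and>
     (\<forall>v::real^'n. v \<noteq> 0 \<longrightarrow>
        (\<exists>e>0. \<exists>S. is_circle S \<and> \<Phi> ` ({t *\<^sub>R v | t. True} \<inter> ball 0 e) \<subseteq> S))"
proof -
  have "0 \<in> {x. 0 < E x}"
    by (simp add: E_def \<mu>_0 q_0)
  then obtain U V \<Psi> where U: "open U" "0 \<in> U" "U \<subseteq> {x. 0 < E x}" and V: "open V" "\<Phi> ` U = V"
    and inverse: "smooth_on V \<Psi>" "\<forall>x\<in>U. \<Psi> (\<Phi> x) = x" "\<forall>y\<in>V. \<Phi> (\<Psi> y) = y"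
    by (rule smooth_local_inverse[OF open_E_pos _ smooth_on_\<Phi> \<Phi>_has_derivative_id])
  have "smooth_on U \<Phi>"
    using smooth_on_\<Phi> U(3) by (rule smooth_on_subset)
  moreover have "\<exists>C. eventually (\<lambda>x. norm (\<Phi> x - x - \<Gamma> x) \<le> C * norm x ^ 3) (at 0)"
  proof
    show "eventually (\<lambda>x. norm (\<Phi> x - x - \<Gamma> x) \<le> (2 * (3 * c^2 + c^3)) * norm x ^ 3) (at 0)"
      using eventually_norm_le_radius by (rule eventually_mono) (rule norm_\<Phi>_remainder_le)
  qed
  moreover have "\<exists>e>0. \<exists>S. is_circle S \<and> \<Phi> ` ({t *\<^sub>R v | t. True} \<inter> ball 0 e) \<subseteq> S"
    if v: "v \<noteq> 0" for v :: "real^'n"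
  proof -
    obtain S where "is_circle S" "\<Phi> ` {t *\<^sub>R v | t. True} \<subseteq> S"
      using \<Phi>_line_in_circle[OF v] by metis
    then show ?thesis
      by (intro exI[of _ 1]) auto
  qed
  ultimately show ?thesis
    using U(1,2) V inverse \<Phi>_0 \<Phi>_has_derivative_id
    by (intro exI[of _ \<Phi>] exI[of _ U] exI[of _ V] exI[of _ \<Psi>] conjI allI impI) simp_all
qed

end

theorem proposition3:
  fixes a :: "'n::finite \<Rightarrow> 'n \<Rightarrow> 'n \<Rightarrow> real"
  assumes "\<forall>x::complex^'n. cbil x x = 0 \<longrightarrow>
             cbil x (quad_complex a x) = 0 \<and> cbil (quad_complex a x) (quad_complex a x) = 0"
  shows "\<exists>(\<Phi>::real^'n \<Rightarrow> real^'n) U V \<Psi>.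
           open U \<and> 0 \<in> U \<and> open V \<and> \<Phi> ` U = V \<and>
           smooth_on U \<Phi> \<and> smooth_on V \<Psi> \<and>
           (\<forall>x\<in>U. \<Psi> (\<Phi> x) = x) \<and> (\<forall>y\<in>V. \<Phi> (\<Psi> y) = y) \<and>
           \<Phi> 0 = 0 \<and> (\<Phi> has_derivative id) (at 0) \<and>
           (\<exists>C. eventually (\<lambda>x. norm (\<Phi> x - x - quad_real a x) \<le> C * norm x ^ 3) (at 0)) \<and>
           (\<forall>v::real^'n. v \<noteq> 0 \<longrightarrow>
              (\<exists>e>0. \<exists>S. is_circle S \<and> \<Phi> ` ({t *\<^sub>R v | t. True} \<inter> ball 0 e) \<subseteq> S))"
proof -
  have cone: "\<forall>z::complex^'n. cbil z z = 0 \<longrightarrow> cbil z (quad_complex a z) = 0"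
    "\<forall>z::complex^'n. cbil z z = 0 \<longrightarrow> cbil (quad_complex a z) (quad_complex a z) = 0"
    using assms by blast+
  obtain \<mu> where \<mu>: "linear \<mu>" "\<And>x. x \<bullet> quad_real a x = (x \<bullet> x) * \<mu> x"
    using inner_quad_real_divisible[OF cone(1)] by metis
  obtain q where q: "smooth_on UNIV q" "q 0 = 0" "\<And>x. quad_real a x \<bullet> quad_real a x = (x \<bullet> x) * q x"
    using norm_quad_real_divisible[OF cone(2)] by metis
  interpret circle_germ "quad_real a" \<mu> q "\<Sum>k\<in>UNIV. \<Sum>i\<in>UNIV. \<Sum>j\<in>UNIV. \<bar>a k i j\<bar>"
    by (rule circle_germ.intro)
       (simp_all add: \<mu> q smooth_on_quad_real quad_real_scaleR quad_real_bound)
  show ?thesis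
    by (rule circle_germ_exists)
qed

end
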